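(* Let $F$ be a field of characteristic two and let $(A,\sigma)$ be a totally decomposable central simple $F$-algebra with orthogonal involution. If $x\in\mathrm{Sym}(A,\sigma)^+$, then $x^2\in Q(\mathfrak{Pf}(A,\sigma))$.
   Context: Involutions are of the first kind. $(A,\sigma)$ is totally decomposable if $(A,\sigma)\simeq\bigotimes_{i=1}^n(Q_i,\sigma_i)$ with quaternion $F$-algebras with involution. $\mathrm{Sym}(A,\sigma)^+=\{x\in A\mid\sigma(x)=x,\ x^2\in F\}$. The Pfister invariant $\mathfrak{Pf}(A,\sigma)$ is the bilinear Pfister form $\langle\!\langle\alpha_1,\dots,\alpha_n\rangle\!\rangle=\langle1,\alpha_1\rangle\otimes\cdots\otimes\langle1,\alpha_n\rangle$ where $\alpha_i\in F^\times$ represents $\mathrm{disc}\,\sigma_i\in F^\times/F^{\times2}$ (independent of the decomposition up to isometry). For a symmetric bilinear form $\mathfrak b$ on $V$, $Q(\mathfrak b)=\{\mathfrak b(v,v)\mid 0\ne v\in V\}\cup\{0\}$. *)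

theory Defs
  imports Main "HOL-Library.FuncSet"
begin

text \<open>The quaternion algebra [a,b)_F (b nonzero) has F-basis e0 = 1, e1 = u, e2 = v, e3 = uv with
  u^2 + u = a, v^2 = b, v u = (u + 1) v.  Every quaternion algebra over a field of characteristic
  two is of this form.  Elements are coefficient vectors  nat => F  (only indices < 4 matter).
  qtab a b k l lists the coordinates of e_k * e_l.\<close>

definition qtab :: "'a::field \<Rightarrow> 'a \<Rightarrow> nat \<Rightarrow> nat \<Rightarrow> 'a list" where
  "qtab a b k l =
    (if k = 0 then [of_bool (l = 0), of_bool (l = 1), of_bool (l = 2), of_bool (l = 3)]
     else if l = 0 then [of_bool (k = 0), of_bool (k = 1), of_bool (k = 2), of_bool (k = 3)]
     else if k = 1 \<and> l = 1 then [a, 1, 0, 0]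
     else if k = 1 \<and> l = 2 then [0, 0, 0, 1]
     else if k = 1 \<and> l = 3 then [0, 0, a, 1]
     else if k = 2 \<and> l = 1 then [0, 0, 1, 1]
     else if k = 2 \<and> l = 2 then [b, 0, 0, 0]
     else if k = 2 \<and> l = 3 then [b, b, 0, 0]
     else if k = 3 \<and> l = 1 then [0, 0, a, 0]
     else if k = 3 \<and> l = 2 then [0, b, 0, 0]
     else [a * b, 0, 0, 0])"

definition qconst :: "'a::field \<Rightarrow> 'a \<Rightarrow> nat \<Rightarrow> nat \<Rightarrow> nat \<Rightarrow> 'a" where
  "qconst a b k l m = qtab a b k l ! m"

definition qmul :: "'a::field \<Rightarrow> 'a \<Rightarrow> (nat \<Rightarrow> 'a) \<Rightarrow> (nat \<Rightarrow> 'a) \<Rightarrow> nat \<Rightarrow> 'a" where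
  "qmul a b x y = (\<lambda>m. \<Sum>k<4. \<Sum>l<4. x k * y l * qconst a b k l m)"

definition qone :: "nat \<Rightarrow> 'a::field" where
  "qone = (\<lambda>m. of_bool (m = 0))"

text \<open>An F-linear map on the quaternion algebra given by a 4x4 matrix M:
  it sends e_k to  sum_l M k l e_l.\<close>
definition qapp :: "(nat \<Rightarrow> nat \<Rightarrow> 'a::field) \<Rightarrow> (nat \<Rightarrow> 'a) \<Rightarrow> nat \<Rightarrow> 'a" where
  "qapp M x = (\<lambda>l. \<Sum>k<4. x k * M k l)"

definition q_involution :: "'a::field \<Rightarrow> 'a \<Rightarrow> (nat \<Rightarrow> nat \<Rightarrow> 'a) \<Rightarrow> bool" where
  "q_involution a b M \<longleftrightarrow>
     (\<forall>x y. \<forall>m<4. qapp M (qmul a b x y) m = qmul a b (qapp M y) (qapp M x) m) \<and>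
     (\<forall>x. \<forall>m<4. qapp M (qapp M x) m = x m)"

definition q_alt :: "(nat \<Rightarrow> nat \<Rightarrow> 'a::field) \<Rightarrow> (nat \<Rightarrow> 'a) \<Rightarrow> bool" where
  "q_alt M y \<longleftrightarrow> (\<exists>x. \<forall>m<4. y m = x m - qapp M x m)"

text \<open>In characteristic two an involution of the first kind is orthogonal iff 1 is not alternating
  (KMRT, Prop. 2.6).\<close>
definition q_orthogonal :: "'a::field \<Rightarrow> 'a \<Rightarrow> (nat \<Rightarrow> nat \<Rightarrow> 'a) \<Rightarrow> bool" where
  "q_orthogonal a b M \<longleftrightarrow> q_involution a b M \<and> \<not> q_alt M qone"

definition qnrd :: "'a::field \<Rightarrow> 'a \<Rightarrow> (nat \<Rightarrow> 'a) \<Rightarrow> 'a" where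
  "qnrd a b x = x 0 ^ 2 + x 0 * x 1 + a * x 1 ^ 2 + b * (x 2 ^ 2 + x 2 * x 3 + a * x 3 ^ 2)"

text \<open>alpha represents disc sigma in F^x/F^x2: disc sigma = (-1)^(deg/2) Nrd(y) for an invertible
  alternating y (KMRT 7.1); for quaternions in characteristic two this is Nrd(y).  Every representative
  of the square class is of this form (scale y).\<close>
definition q_disc_rep :: "'a::field \<Rightarrow> 'a \<Rightarrow> (nat \<Rightarrow> nat \<Rightarrow> 'a) \<Rightarrow> 'a \<Rightarrow> bool" where
  "q_disc_rep a b M \<alpha> \<longleftrightarrow> \<alpha> \<noteq> 0 \<and> (\<exists>y. q_alt M y \<and> qnrd a b y = \<alpha>)"

text \<open>The tensor product Q_0 (x) ... (x) Q_{n-1}, Q_i = [a i, b i), has basis e_s = (x)_i e_{s i}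
  indexed by s in tidx n; elements are coefficient functions vanishing outside tidx n.\<close>
definition tidx :: "nat \<Rightarrow> (nat \<Rightarrow> nat) set" where
  "tidx n = PiE {..<n} (\<lambda>_. {..<4})"

definition tcarrier :: "nat \<Rightarrow> ((nat \<Rightarrow> nat) \<Rightarrow> 'a::field) set" where
  "tcarrier n = {x. \<forall>s. s \<notin> tidx n \<longrightarrow> x s = 0}"

definition tmul :: "nat \<Rightarrow> (nat \<Rightarrow> 'a::field) \<Rightarrow> (nat \<Rightarrow> 'a) \<Rightarrow>
    ((nat \<Rightarrow> nat) \<Rightarrow> 'a) \<Rightarrow> ((nat \<Rightarrow> nat) \<Rightarrow> 'a) \<Rightarrow> (nat \<Rightarrow> nat) \<Rightarrow> 'a" where
  "tmul n a b x y = (\<lambda>r. if r \<in> tidx n then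
      (\<Sum>s\<in>tidx n. \<Sum>t\<in>tidx n. x s * y t * (\<Prod>i<n. qconst (a i) (b i) (s i) (t i) (r i)))
    else 0)"

definition tscal :: "nat \<Rightarrow> 'a::field \<Rightarrow> (nat \<Rightarrow> nat) \<Rightarrow> 'a" where
  "tscal n c = (\<lambda>r. if r = restrict (\<lambda>_. 0) {..<n} then c else 0)"

definition tinv :: "nat \<Rightarrow> (nat \<Rightarrow> nat \<Rightarrow> nat \<Rightarrow> 'a::field) \<Rightarrow>
    ((nat \<Rightarrow> nat) \<Rightarrow> 'a) \<Rightarrow> (nat \<Rightarrow> nat) \<Rightarrow> 'a" where
  "tinv n M x = (\<lambda>r. if r \<in> tidx n then (\<Sum>s\<in>tidx n. x s * (\<Prod>i<n. M i (s i) (r i))) else 0)"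

definition sym_plus :: "nat \<Rightarrow> (nat \<Rightarrow> 'a::field) \<Rightarrow> (nat \<Rightarrow> 'a) \<Rightarrow> (nat \<Rightarrow> nat \<Rightarrow> nat \<Rightarrow> 'a) \<Rightarrow>
    ((nat \<Rightarrow> nat) \<Rightarrow> 'a) set" where
  "sym_plus n a b M = {x \<in> tcarrier n. tinv n M x = x \<and> (\<exists>c. tmul n a b x x = tscal n c)}"

text \<open><<alpha_0,...,alpha_{n-1}>> = <1,alpha_0> (x) ... (x) <1,alpha_{n-1}>, on the space with basis
  indexed by subsets S of {..<n}: the diagonal form with entries prod_{i in S} alpha_i.\<close>
definition pfister_form :: "nat \<Rightarrow> (nat \<Rightarrow> 'a::field) \<Rightarrow> (nat set \<Rightarrow> 'a) \<Rightarrow> (nat set \<Rightarrow> 'a) \<Rightarrow> 'a" where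
  "pfister_form n \<alpha> v w = (\<Sum>S\<in>Pow {..<n}. (\<Prod>i\<in>S. \<alpha> i) * v S * w S)"

definition pfister_Q :: "nat \<Rightarrow> (nat \<Rightarrow> 'a::field) \<Rightarrow> 'a set" where
  "pfister_Q n \<alpha> = {pfister_form n \<alpha> v v | v. (\<exists>S\<in>Pow {..<n}. v S \<noteq> 0)} \<union> {0}"

end

theory Submission
  imports Defs
begin

text \<open>For each quaternion factor (Q, sigma) with discriminant alpha there is a linear form f with
  f(1) = 1 such that (x, y) \<mapsto> f(x sigma(y)) is symmetric with all diagonal values represented by
  <1, alpha>.  Indeed sigma(p) = k conj(p) k^-1 where k is a nonzero multiple of the conjugate of an
  invertible alternating element, so k^2 = alpha up to a nonzero square; then
  Trd(p sigma(p)) = Trd(p)^2 + Trd(pk)^2 / k^2 is represented by <1, alpha>, and f = Trd(h \<cdot>) with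
  h = w sigma(w) / Trd(w sigma(w)) works.  The tensor product psi of these linear forms satisfies
  psi(1) = 1, hence c = psi(x sigma(x)).  The form (y, z) \<mapsto> psi(y sigma(z)) is the tensor
  product of the factor forms; being symmetric in characteristic two its value at x is
  sum_s x_s^2 prod_i B_i(s_i, s_i), every product is a value of <<alpha_1, ..., alpha_n>>, and
  squaring is additive, so c is a value of the Pfister form.\<close>

section \<open>Quaternion algebras in characteristic two\<close>

datatype 'a qt = Qt 'a 'a 'a 'a

instantiation qt :: (ab_group_add) ab_group_add
begin

fun plus_qt :: "'a qt \<Rightarrow> 'a qt \<Rightarrow> 'a qt" where
  "Qt x0 x1 x2 x3 + Qt y0 y1 y2 y3 = Qt (x0 + y0) (x1 + y1) (x2 + y2) (x3 + y3)"

fun minus_qt :: "'a qt \<Rightarrow> 'a qt \<Rightarrow> 'a qt" where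
  "Qt x0 x1 x2 x3 - Qt y0 y1 y2 y3 = Qt (x0 - y0) (x1 - y1) (x2 - y2) (x3 - y3)"

fun uminus_qt :: "'a qt \<Rightarrow> 'a qt" where
  "- Qt x0 x1 x2 x3 = Qt (- x0) (- x1) (- x2) (- x3)"

definition zero_qt :: "'a qt" where
  "0 = Qt 0 0 0 0"

instance
proof
  fix x y z :: "'a qt"
  show "x + y + z = x + (y + z)" by (cases x; cases y; cases z) (simp add: add.assoc)
  show "x + y = y + x" by (cases x; cases y) (simp add: add.commute)
  show "0 + x = x" by (cases x) (simp add: zero_qt_def)
  show "- x + x = 0" by (cases x) (simp add: zero_qt_def)
  show "x - y = x + - y" by (cases x; cases y) simp
qed

end

text \<open>The multiplication table of [a,b) in the basis 1, u, v, uv, with signs dropped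
  (characteristic two).\<close>
fun qmult :: "'a::field \<Rightarrow> 'a \<Rightarrow> 'a qt \<Rightarrow> 'a qt \<Rightarrow> 'a qt" where
  "qmult a b (Qt x0 x1 x2 x3) (Qt y0 y1 y2 y3) =
    Qt (x0*y0 + a*x1*y1 + b*x2*y2 + b*x2*y3 + a*b*x3*y3)
       (x0*y1 + x1*y0 + x1*y1 + b*x2*y3 + b*x3*y2)
       (x0*y2 + x2*y0 + a*x1*y3 + x2*y1 + a*x3*y1)
       (x0*y3 + x3*y0 + x1*y2 + x1*y3 + x2*y1)"

fun qscale :: "'a::field \<Rightarrow> 'a qt \<Rightarrow> 'a qt" where
  "qscale c (Qt x0 x1 x2 x3) = Qt (c * x0) (c * x1) (c * x2) (c * x3)"

definition qscalar :: "'a::field \<Rightarrow> 'a qt" where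
  "qscalar c = Qt c 0 0 0"

fun qconj :: "'a::field qt \<Rightarrow> 'a qt" where
  "qconj (Qt x0 x1 x2 x3) = Qt (x0 + x1) x1 x2 x3"

fun qtrace :: "'a::field qt \<Rightarrow> 'a" where
  "qtrace (Qt x0 x1 x2 x3) = x1"

fun qnorm :: "'a::field \<Rightarrow> 'a \<Rightarrow> 'a qt \<Rightarrow> 'a" where
  "qnorm a b (Qt x0 x1 x2 x3) = x0 ^ 2 + x0 * x1 + a * x1 ^ 2 + b * (x2 ^ 2 + x2 * x3 + a * x3 ^ 2)"

definition qu :: "'a::field qt" where
  "qu = Qt 0 1 0 0"

definition qv :: "'a::field qt" where
  "qv = Qt 0 0 1 0"

lemma zero_qt_eq: "(0::'a::ab_group_add qt) = Qt 0 0 0 0"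
  by (simp add: zero_qt_def)

lemma qv_nonzero: "qv \<noteq> 0"
  by (simp add: qv_def zero_qt_eq)

lemma qtrace_add [simp]: "qtrace (x + y) = qtrace x + qtrace (y::'a::field qt)"
  by (cases x; cases y) simp

lemma qtrace_qscale [simp]: "qtrace (qscale c x) = c * qtrace x"
  by (cases x) simp

lemma qtrace_qscalar [simp]: "qtrace (qscalar c) = 0"
  by (simp add: qscalar_def)

lemma qtrace_qconj [simp]: "qtrace (qconj x) = qtrace x"
  by (cases x) simp

lemma qscale_add [simp]: "qscale c (x + y) = qscale c x + qscale c y"
  by (cases x; cases y) (simp add: algebra_simps)

lemma qscale_qscale [simp]: "qscale c (qscale d x) = qscale (c * d) x"
  by (cases x) (simp add: algebra_simps)

lemma qscale_one [simp]: "qscale 1 x = x"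
  by (cases x) simp

lemma qscale_zero [simp]: "qscale 0 x = 0" "qscale c 0 = 0"
  by (cases x) (simp_all add: zero_qt_eq)

lemma qscale_eq_zero_iff: "qscale c x = 0 \<longleftrightarrow> c = 0 \<or> x = 0"
  by (cases x) (auto simp: zero_qt_eq)

lemma qscale_qscalar [simp]: "qscale c (qscalar d) = qscalar (c * d)"
  by (simp add: qscalar_def)

lemma qscalar_zero [simp]: "qscalar 0 = 0"
  by (simp add: qscalar_def zero_qt_eq)

lemma qscalar_eq_zero_iff [simp]: "qscalar c = 0 \<longleftrightarrow> c = 0"
  by (simp add: qscalar_def zero_qt_eq)

lemma qconj_add [simp]: "qconj (x + y) = qconj x + qconj y"
  by (cases x; cases y) simp

lemma qconj_qscale [simp]: "qconj (qscale c x) = qscale c (qconj x)"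
  by (cases x) (simp add: algebra_simps)

lemma qconj_qscalar [simp]: "qconj (qscalar c) = qscalar c"
  by (simp add: qscalar_def)

locale char2_quat =
  fixes a b :: "'a::field"
  assumes two: "(2::'a) = 0"
begin

abbreviation mult (infixl "\<cdot>" 70) where
  "x \<cdot> y \<equiv> qmult a b x y"

lemma add_self [simp]: "(x::'a) + x = 0"
  using two by (metis mult_2 mult_zero_left)

lemma qt_add_self [simp]: "(x::'a qt) + x = 0"
  by (cases x) (simp add: zero_qt_eq two flip: mult_2)

lemma qt_add_self_left [simp]: "(x::'a qt) + (x + y) = y"
  by (metis add.assoc qt_add_self add_0)

lemma qt_uminus_eq_self [simp]: "- (x::'a qt) = x"
  by (metis add_eq_0_iff qt_add_self)

lemma qt_diff_eq_add [simp]: "(x::'a qt) - y = x + y"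
  by simp

lemma qt_add_eq_zero_iff: "(x::'a qt) + y = 0 \<longleftrightarrow> x = y"
  by (metis add_eq_0_iff qt_uminus_eq_self)

lemma mult_assoc [simp]: "(x \<cdot> y) \<cdot> z = x \<cdot> (y \<cdot> z)"
  by (cases x; cases y; cases z; simp add: algebra_simps two)

lemma mult_add_right [simp]: "x \<cdot> (y + z) = x \<cdot> y + x \<cdot> z"
  by (cases x; cases y; cases z; simp add: algebra_simps)

lemma mult_add_left [simp]: "(y + z) \<cdot> x = y \<cdot> x + z \<cdot> x"
  by (cases x; cases y; cases z; simp add: algebra_simps)

lemma qscale_mult_left [simp]: "qscale c x \<cdot> y = qscale c (x \<cdot> y)"
  by (cases x; cases y; simp add: algebra_simps)

lemma qscale_mult_right [simp]: "x \<cdot> qscale c y = qscale c (x \<cdot> y)"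
  by (cases x; cases y; simp add: algebra_simps)

lemma qscalar_mult_left [simp]: "qscalar c \<cdot> y = qscale c y"
  by (cases y; simp add: qscalar_def algebra_simps)

lemma qscalar_mult_right [simp]: "y \<cdot> qscalar c = qscale c y"
  by (cases y; simp add: qscalar_def algebra_simps)

lemma qconj_qconj [simp]: "qconj (qconj x) = (x::'a qt)"
  by (cases x) (simp add: add.assoc two flip: mult_2)

lemma qconj_mult [simp]: "qconj (x \<cdot> y) = qconj y \<cdot> qconj x"
  by (cases x; cases y; simp add: algebra_simps two)

lemma add_qconj: "(x::'a qt) + qconj x = qscalar (qtrace x)"
  by (cases x) (simp add: qscalar_def add.assoc two flip: mult_2)

lemma qconj_mult_self: "qconj x \<cdot> x = qscalar (qnorm a b x)"
  by (cases x; simp add: qscalar_def algebra_simps power2_eq_square two)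

lemma qtrace_mult_commute: "qtrace (x \<cdot> y) = qtrace (y \<cdot> x)"
  by (cases x; cases y; simp add: algebra_simps)

lemma qtrace_mult_self: "qtrace (x \<cdot> x) = qtrace x ^ 2"
  by (cases x; simp add: algebra_simps power2_eq_square)

lemma qu_mult_qu: "qu \<cdot> qu = qscalar a + qu"
  by (simp add: qu_def qscalar_def)

lemma qv_mult_qv: "qv \<cdot> qv = qscalar b"
  by (simp add: qv_def qscalar_def)

lemma qv_mult_qu: "qv \<cdot> qu = qu \<cdot> qv + qv"
  by (simp add: qu_def qv_def)

lemma qconj_qu: "qconj qu = qscalar 1 + qu"
  by (simp add: qu_def qscalar_def)

lemma qconj_qv: "qconj qv = qv"
  by (simp add: qv_def)

lemma qconj_qu_qv: "qconj (qu \<cdot> qv) = qu \<cdot> qv"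
  by (simp add: qu_def qv_def)

lemma qtrace_qu: "qtrace qu = 1"
  by (simp add: qu_def)

lemma qt_basis_expansion: "Qt x0 x1 x2 x3 = qscalar x0 + qscale x1 qu + qscale x2 qv + qscale x3 (qu \<cdot> qv)"
  by (simp add: qu_def qv_def qscalar_def)

end

section \<open>Orthogonal involutions of a quaternion algebra\<close>

lemma binary_form_mult:
  fixes \<alpha> :: "'a::comm_ring_1"
  shows "(P^2 + R^2 * \<alpha>) * (P0^2 + R0^2 * \<alpha>) = (P*P0 + R*R0*\<alpha>)^2 + (P*R0 - R*P0)^2 * \<alpha>"
  by (simp add: power2_eq_square algebra_simps)

lemma binary_form_divide:
  fixes \<alpha> :: "'a::field"
  assumes "P0^2 + R0^2 * \<alpha> \<noteq> 0"
  shows "\<exists>p q. (P^2 + R^2 * \<alpha>) / (P0^2 + R0^2 * \<alpha>) = p^2 + q^2 * \<alpha>"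
proof -
  define D where "D = P0^2 + R0^2 * \<alpha>"
  have "(P^2 + R^2 * \<alpha>) / D = ((P^2 + R^2 * \<alpha>) * D) / D^2"
    using assms by (simp add: D_def power2_eq_square)
  also have "\<dots> = ((P*P0 + R*R0*\<alpha>) / D)^2 + ((P*R0 - R*P0) / D)^2 * \<alpha>"
    unfolding D_def binary_form_mult by (simp add: power_divide times_divide_eq_left flip: add_divide_distrib diff_divide_distrib)
  finally show ?thesis unfolding D_def by blast
qed

locale quat_orthogonal_involution = char2_quat +
  fixes sg :: "'a qt \<Rightarrow> 'a qt"
  assumes b_nonzero: "b \<noteq> 0"
    and sg_add: "sg (x + y) = sg x + sg y"
    and sg_qscale: "sg (qscale c x) = qscale c (sg x)"
    and sg_mult: "sg (x \<cdot> y) = sg y \<cdot> sg x"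
    and sg_sg: "sg (sg x) = x"
    and one_not_alternating: "z + sg z \<noteq> qscalar 1"
begin

lemma sg_qscalar [simp]: "sg (qscalar c) = qscalar c"
proof -
  define e where "e = sg (qscalar 1)"
  have "sg e = qscalar 1" by (simp add: e_def sg_sg)
  moreover have "sg e = e"
    using sg_mult[of e "qscalar 1"] by (simp add: \<open>sg e = qscalar 1\<close> flip: e_def)
  ultimately show ?thesis
    using sg_qscale[of c "qscalar 1"] by (simp add: e_def)
qed

lemma sg_ne_qconj: "\<exists>p. sg p \<noteq> qconj p"
proof -
  have "(qu::'a qt) + qconj qu = qscalar 1" by (simp add: add_qconj qtrace_qu)
  thus ?thesis using one_not_alternating[of qu] by metis
qed

text \<open>An invertible intertwiner k exhibits sg as the conjugate  p \<mapsto> k qconj(p) k^-1  of the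
  canonical involution (Skolem-Noether).\<close>
definition intertwiner :: "'a qt \<Rightarrow> bool" where
  "intertwiner k \<longleftrightarrow> (\<forall>p. sg p \<cdot> k = k \<cdot> qconj p)"

lemma intertwiner_if_generators:
  assumes u: "sg qu \<cdot> k = k \<cdot> (qscalar 1 + qu)" and v: "sg qv \<cdot> k = k \<cdot> qv"
  shows "intertwiner k"
  unfolding intertwiner_def
proof
  fix p :: "'a qt"
  obtain p0 p1 p2 p3 where p: "p = Qt p0 p1 p2 p3" by (cases p)
  have uv: "sg (qu \<cdot> qv) \<cdot> k = k \<cdot> (qu \<cdot> qv)"
  proof -
    have "sg (qu \<cdot> qv) \<cdot> k = sg qv \<cdot> (sg qu \<cdot> k)" by (simp add: sg_mult)
    also have "\<dots> = (sg qv \<cdot> k) \<cdot> (qscalar 1 + qu)" by (simp only: u mult_assoc)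
    also have "\<dots> = k \<cdot> (qv \<cdot> (qscalar 1 + qu))" by (simp only: v mult_assoc)
    finally show ?thesis by (simp add: qv_mult_qu)
  qed
  show "sg p \<cdot> k = k \<cdot> qconj p"
    unfolding p qt_basis_expansion
    by (simp add: sg_add sg_qscale u v uv qconj_qu qconj_qv qconj_qu_qv qv_mult_qu)
qed

lemma sg_qu_mult_sg_qu: "sg qu \<cdot> (sg qu \<cdot> x) = qscale a x + sg qu \<cdot> x"
  using arg_cong[OF qu_mult_qu, of sg] by (simp add: sg_mult sg_add flip: mult_assoc)

lemma sg_qv_mult_sg_qv: "sg qv \<cdot> (sg qv \<cdot> x) = qscale b x"
  using arg_cong[OF qv_mult_qv, of sg] by (simp add: sg_mult flip: mult_assoc)

lemma sg_qu_mult_sg_qv: "sg qu \<cdot> (sg qv \<cdot> x) = sg qv \<cdot> (sg qu \<cdot> x) + sg qv \<cdot> x"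
  using arg_cong[OF qv_mult_qu, of sg] by (simp add: sg_mult sg_add flip: mult_assoc)

lemma exists_qu_intertwiner: "\<exists>k. k \<noteq> 0 \<and> sg qu \<cdot> k = k \<cdot> (qscalar 1 + qu)"
proof -
  define k where "k t = sg qu \<cdot> t + t \<cdot> qu" for t
  have "sg qu \<cdot> k t = k t \<cdot> (qscalar 1 + qu)" for t
    by (simp add: k_def sg_qu_mult_sg_qu qu_mult_qu add_ac)
  moreover have "\<exists>t. k t \<noteq> 0"
  proof (cases "sg qu = qu")
    case True
    hence "k qv = qv" by (simp add: k_def qv_mult_qu)
    thus ?thesis using qv_nonzero by metis
  next
    case False
    hence "k (qscalar 1) \<noteq> 0" by (simp add: k_def qt_add_eq_zero_iff)
    thus ?thesis by blast
  qed
  ultimately show ?thesis by blast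
qed

lemma exists_intertwiner: "\<exists>k. k \<noteq> 0 \<and> intertwiner k"
proof -
  obtain k where k_nonzero: "k \<noteq> 0" and k_u: "sg qu \<cdot> k = k \<cdot> (qscalar 1 + qu)"
    using exists_qu_intertwiner by blast
  have k_u': "sg qu \<cdot> (k \<cdot> x) = k \<cdot> (x + qu \<cdot> x)" for x
    using arg_cong[OF k_u, of "\<lambda>y. y \<cdot> x"] by simp
  define vi where "vi = qscale (1/b) qv"
  have b_vi: "qscale b vi = qv" using b_nonzero by (simp add: vi_def)
  have vi_qv: "vi \<cdot> qv = qscalar 1" using b_nonzero by (simp add: vi_def qv_mult_qv)
  have vi_qu: "vi \<cdot> qu = qu \<cdot> vi + vi" by (simp add: vi_def qv_mult_qu)
  txt \<open>K still intertwines u and also intertwines v; if K = 0 then k already intertwines v.\<close>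
  define K where "K = k + sg qv \<cdot> (k \<cdot> vi)"
  have "sg qu \<cdot> K = sg qu \<cdot> k + sg qv \<cdot> (k \<cdot> (vi + qu \<cdot> vi)) + sg qv \<cdot> (k \<cdot> vi)"
    by (simp add: K_def sg_qu_mult_sg_qv k_u' add_ac)
  hence K_u: "sg qu \<cdot> K = K \<cdot> (qscalar 1 + qu)"
    by (simp add: K_def k_u vi_qu add_ac)
  have "sg qv \<cdot> K = sg qv \<cdot> k + k \<cdot> qscale b vi" by (simp add: K_def sg_qv_mult_sg_qv)
  hence K_v: "sg qv \<cdot> K = K \<cdot> qv" by (simp add: K_def b_vi vi_qv add_ac)
  show ?thesis
  proof (cases "K = 0")
    case True
    hence "k = sg qv \<cdot> (k \<cdot> vi)" unfolding K_def by (simp only: qt_add_eq_zero_iff)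
    hence "sg qv \<cdot> k = k \<cdot> qscale b vi" by (metis sg_qv_mult_sg_qv qscale_mult_right)
    hence "sg qv \<cdot> k = k \<cdot> qv" by (simp only: b_vi)
    thus ?thesis using k_nonzero k_u intertwiner_if_generators by blast
  next
    case False
    thus ?thesis using K_u K_v intertwiner_if_generators by blast
  qed
qed

lemma intertwiner_qconj:
  assumes "intertwiner k"
  shows "qconj k = k"
proof -
  have "q \<cdot> (k + qconj k) = (k + qconj k) \<cdot> qconj (sg q)" for q
  proof -
    have "qconj k \<cdot> qconj (sg q) = q \<cdot> qconj k"
      using arg_cong[of _ _ qconj, OF assms[unfolded intertwiner_def, rule_format, of q]] by simp
    moreover have "q \<cdot> k = k \<cdot> qconj (sg q)"
      using assms[unfolded intertwiner_def, rule_format, of "sg q"] by (simp add: sg_sg)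
    ultimately show ?thesis by simp
  qed
  hence tr: "qscale (qtrace k) q = qscale (qtrace k) (qconj (sg q))" for q
    by (simp add: add_qconj)
  have "qtrace k = 0"
  proof (rule ccontr)
    assume "qtrace k \<noteq> 0"
    hence "q = qconj (sg q)" for q
      using arg_cong[OF tr[of q], of "qscale (1 / qtrace k)"] by simp
    hence "sg q = qconj q" for q by (metis qconj_qconj)
    thus False using sg_ne_qconj by blast
  qed
  thus ?thesis using add_qconj[of k] by (simp add: qt_add_eq_zero_iff)
qed

end

locale quat_orthogonal_involution_disc = quat_orthogonal_involution +
  fixes z0 :: "'a qt" and \<alpha> :: 'a
  assumes norm_alternating: "qnorm a b (z0 + sg z0) = \<alpha>"
    and \<alpha>_nonzero: "\<alpha> \<noteq> 0"
begin

text \<open>The intertwiner is proportional to the conjugate of the invertible alternating element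
  y = z0 + sg z0, so its square is the discriminant up to a nonzero square.\<close>
lemma obtain_intertwiner_with_square:
  obtains k c where "c \<noteq> 0" "qconj k = k" "k \<cdot> k = qscalar (c^2 * \<alpha>)" "intertwiner k"
proof -
  obtain k where k_nonzero: "k \<noteq> 0" and k: "intertwiner k"
    using exists_intertwiner by blast
  have k_conj: "qconj k = k" using k by (rule intertwiner_qconj)
  define y where "y = z0 + sg z0"
  define l where "l = qtrace (z0 \<cdot> k)"
  have "y \<cdot> k = z0 \<cdot> k + qconj (z0 \<cdot> k)"
    using k k_conj by (simp add: y_def intertwiner_def)
  hence yk: "y \<cdot> k = qscalar l" by (simp only: add_qconj l_def)
  have yy: "qconj y \<cdot> y = qscalar \<alpha>"
    using qconj_mult_self[of y] norm_alternating by (simp add: y_def)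
  have "qscale \<alpha> k = qconj y \<cdot> (y \<cdot> k)"
    using arg_cong[OF yy, of "\<lambda>z. z \<cdot> k"] by simp
  hence \<alpha>k: "qscale \<alpha> k = qscale l (qconj y)" by (simp add: yk)
  have "l \<noteq> 0"
    using \<alpha>k \<alpha>_nonzero k_nonzero by (auto simp: qscale_eq_zero_iff)
  define c where "c = l / \<alpha>"
  have c_nonzero: "c \<noteq> 0" using \<open>l \<noteq> 0\<close> \<alpha>_nonzero by (simp add: c_def)
  have k_eq: "k = qscale c (qconj y)"
    using arg_cong[OF \<alpha>k, of "qscale (1 / \<alpha>)"] \<alpha>_nonzero by (simp add: c_def)
  have "k \<cdot> k = qscale c (qconj y) \<cdot> qscale c y"
    using arg_cong[OF k_eq, of qconj] k_conj k_eq by simp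
  also have "\<dots> = qscalar (c^2 * \<alpha>)" by (simp add: yy power2_eq_square mult.assoc)
  finally show ?thesis using that c_nonzero k_conj k by blast
qed

lemma intertwiner_conjugation:
  assumes "intertwiner k" "k \<cdot> k = qscalar \<beta>"
  shows "qscale \<beta> (sg p) = k \<cdot> (qconj p \<cdot> k)"
proof -
  have "qscale \<beta> (sg p) = (sg p \<cdot> k) \<cdot> k" using assms(2) by simp
  also have "\<dots> = k \<cdot> (qconj p \<cdot> k)" using assms(1) by (simp add: intertwiner_def)
  finally show ?thesis .
qed

lemma qtrace_sg [simp]: "qtrace (sg p) = qtrace p"
proof -
  obtain k c where c: "c \<noteq> 0" and kk: "k \<cdot> k = qscalar (c^2 * \<alpha>)" and k: "intertwiner k"
    using obtain_intertwiner_with_square by metis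
  have "c^2 * \<alpha> * qtrace (sg p) = qtrace (k \<cdot> (qconj p \<cdot> k))"
    using arg_cong[OF intertwiner_conjugation[OF k kk, of p], of qtrace] by simp
  also have "\<dots> = qtrace ((qconj p \<cdot> k) \<cdot> k)" by (rule qtrace_mult_commute)
  also have "\<dots> = c^2 * \<alpha> * qtrace p" using kk by simp
  finally show ?thesis using c \<alpha>_nonzero by simp
qed

definition sg_form :: "'a qt \<Rightarrow> 'a" where
  "sg_form p = qtrace (p \<cdot> sg p)"

lemma sg_form_eq:
  assumes c: "c \<noteq> 0" and k_conj: "qconj k = k" and kk: "k \<cdot> k = qscalar (c^2 * \<alpha>)"
    and k: "intertwiner k"
  shows "sg_form p = qtrace p ^ 2 + (qtrace (p \<cdot> k) / (c * \<alpha>))^2 * \<alpha>"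
proof -
  define \<beta> where "\<beta> = c^2 * \<alpha>"
  have \<beta>_nonzero: "\<beta> \<noteq> 0" using c \<alpha>_nonzero by (simp add: \<beta>_def)
  have conj_p: "qconj p = qscalar (qtrace p) + p"
    using add_qconj[of p] by (metis add.commute qt_add_self_left)
  have "\<beta> * sg_form p = qtrace (p \<cdot> qscale \<beta> (sg p))" by (simp add: sg_form_def)
  also have "\<dots> = qtrace (p \<cdot> (k \<cdot> (qconj p \<cdot> k)))"
    by (simp only: intertwiner_conjugation[OF k kk[folded \<beta>_def]])
  also have "\<dots> = \<beta> * qtrace p ^ 2 + qtrace ((p \<cdot> k) \<cdot> (p \<cdot> k))"
  proof -
    have "k \<cdot> (qscalar (qtrace p) \<cdot> k) = qscale (qtrace p) (qscalar \<beta>)"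
      using kk by (simp add: \<beta>_def)
    thus ?thesis unfolding conj_p by (simp add: power2_eq_square algebra_simps del: qscalar_mult_left)
  qed
  also have "\<dots> = \<beta> * qtrace p ^ 2 + qtrace (p \<cdot> k) ^ 2" by (simp only: qtrace_mult_self)
  finally have "sg_form p = qtrace p ^ 2 + qtrace (p \<cdot> k) ^ 2 / \<beta>"
    using \<beta>_nonzero by (simp add: field_simps)
  thus ?thesis using c \<alpha>_nonzero
    by (simp add: \<beta>_def power_divide power_mult_distrib power2_eq_square)
qed

lemma sg_form_represented: "\<exists>P R. sg_form p = P^2 + R^2 * \<alpha>"
  using obtain_intertwiner_with_square sg_form_eq by metis

lemma exists_sg_form_nonzero: "\<exists>w. sg_form w \<noteq> 0"
proof (rule ccontr)
  assume "\<nexists>w. sg_form w \<noteq> 0"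
  hence zero: "sg_form w = 0" for w by blast
  obtain k c where c: "c \<noteq> 0" and k_conj: "qconj k = k" and kk: "k \<cdot> k = qscalar (c^2 * \<alpha>)"
    and k: "intertwiner k"
    using obtain_intertwiner_with_square by metis
  have trace_zero: "qtrace (p \<cdot> k) = 0" if "qtrace p = 0" for p
    using zero[of p] sg_form_eq[OF c k_conj kk k, of p] that c \<alpha>_nonzero by simp
  obtain k0 k1 k2 k3 where k_eq: "k = Qt k0 k1 k2 k3" by (cases k)
  have "k1 = 0" using k_conj k_eq by simp
  moreover have "k3 = 0" using trace_zero[of qv] k_eq b_nonzero by (simp add: qv_def)
  moreover have "k2 = 0" using trace_zero[of "qu \<cdot> qv"] k_eq b_nonzero by (simp add: qv_def qu_def)
  ultimately have k_scalar: "k = qscalar k0" using k_eq by (simp add: qscalar_def)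
  have "k0 \<noteq> 0" using kk k_scalar c \<alpha>_nonzero by auto
  have "sg p = qconj p" for p
    using arg_cong[OF k[unfolded intertwiner_def, rule_format, of p], of "qscale (1 / k0)"]
      \<open>k0 \<noteq> 0\<close> by (simp add: k_scalar)
  thus False using sg_ne_qconj by blast
qed

lemma exists_symmetric_trace_functional:
  "\<exists>h. qtrace h = 1 \<and> (\<forall>x z. qtrace (h \<cdot> (x \<cdot> sg z)) = qtrace (h \<cdot> (z \<cdot> sg x)))
     \<and> (\<forall>x. \<exists>p q. qtrace (h \<cdot> (x \<cdot> sg x)) = p^2 + q^2 * \<alpha>)"
proof -
  obtain w where w: "sg_form w \<noteq> 0" using exists_sg_form_nonzero by blast
  define h where "h = qscale (1 / sg_form w) (w \<cdot> sg w)"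
  have sg_h: "sg h = h" by (simp add: h_def sg_qscale sg_mult sg_sg)
  have "qtrace h = 1" using w by (simp add: h_def sg_form_def)
  moreover have "qtrace (h \<cdot> (x \<cdot> sg z)) = qtrace (h \<cdot> (z \<cdot> sg x))" for x z
  proof -
    have "qtrace (h \<cdot> (x \<cdot> sg z)) = qtrace (sg (h \<cdot> (x \<cdot> sg z)))" by simp
    also have "sg (h \<cdot> (x \<cdot> sg z)) = (z \<cdot> sg x) \<cdot> h" by (simp only: sg_mult sg_sg sg_h)
    finally show ?thesis by (simp only: qtrace_mult_commute)
  qed
  moreover have "\<exists>p q. qtrace (h \<cdot> (x \<cdot> sg x)) = p^2 + q^2 * \<alpha>" for x
  proof -
    have "qtrace (w \<cdot> (sg w \<cdot> (x \<cdot> sg x))) = qtrace ((sg w \<cdot> (x \<cdot> sg x)) \<cdot> w)"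
      by (rule qtrace_mult_commute)
    also have "\<dots> = sg_form (sg w \<cdot> x)" by (simp add: sg_form_def sg_mult sg_sg)
    finally have "qtrace (h \<cdot> (x \<cdot> sg x)) = sg_form (sg w \<cdot> x) / sg_form w"
      by (simp add: h_def)
    thus ?thesis using sg_form_represented[of "sg w \<cdot> x"] sg_form_represented[of w] w
      binary_form_divide by metis
  qed
  ultimately show ?thesis by blast
qed

end

section \<open>Quaternions as coefficient vectors\<close>

definition qt_of :: "(nat \<Rightarrow> 'a) \<Rightarrow> 'a qt" where
  "qt_of x = Qt (x 0) (x 1) (x 2) (x 3)"

fun coeffs :: "'a::zero qt \<Rightarrow> nat \<Rightarrow> 'a" where
  "coeffs (Qt x0 x1 x2 x3) =
    (\<lambda>m. if m = 0 then x0 else if m = 1 then x1 else if m = 2 then x2 else if m = 3 then x3 else 0)"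

definition qbasis :: "nat \<Rightarrow> 'a::field qt" where
  "qbasis k = qt_of (\<lambda>j. of_bool (j = k))"

definition matrix_qinv :: "(nat \<Rightarrow> nat \<Rightarrow> 'a::field) \<Rightarrow> 'a qt \<Rightarrow> 'a qt" where
  "matrix_qinv M p = qt_of (qapp M (coeffs p))"

text \<open>The value  f(e_k sigma(e_l))  of the linear functional with  f(e_m) = f m, where sigma is
  given by the matrix M.\<close>
definition qinv_form :: "'a::field \<Rightarrow> 'a \<Rightarrow> (nat \<Rightarrow> nat \<Rightarrow> 'a) \<Rightarrow> (nat \<Rightarrow> 'a) \<Rightarrow> nat \<Rightarrow> nat \<Rightarrow> 'a" where
  "qinv_form a b M f k l = (\<Sum>t<4. M l t * (\<Sum>m<4. qconst a b k t m * f m))"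

lemma lessThan_4: "{..<4::nat} = {0, 1, 2, 3}"
  by auto

lemma qt_of_coeffs [simp]: "qt_of (coeffs p) = p"
  by (cases p) (simp add: qt_of_def)

lemma qt_of_eq_iff: "qt_of x = qt_of y \<longleftrightarrow> (\<forall>m<4. x m = y m)"
proof
  assume "qt_of x = qt_of y"
  thus "\<forall>m<4. x m = y m" by (auto simp: qt_of_def less_Suc_eq numeral_eq_Suc)
qed (simp add: qt_of_def)

lemma qt_of_qmul: "qt_of (qmul a b x y) = qmult a b (qt_of x) (qt_of y)"
  by (simp add: qt_of_def qmul_def qconst_def qtab_def lessThan_4 algebra_simps)

lemma qt_of_qapp_cong: "qt_of x = qt_of y \<Longrightarrow> qt_of (qapp M x) = qt_of (qapp M y)"
  unfolding qt_of_eq_iff qapp_def by (simp add: lessThan_4)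

lemma qt_of_diff: "qt_of (\<lambda>m. x m - y m) = qt_of x - qt_of y"
  by (simp add: qt_of_def)

lemma qt_of_qone: "qt_of qone = qscalar 1"
  by (simp add: qt_of_def qone_def qscalar_def)

lemma matrix_qinv_qt_of: "matrix_qinv M (qt_of x) = qt_of (qapp M x)"
  unfolding matrix_qinv_def by (rule qt_of_qapp_cong) simp

lemma matrix_qinv_add: "matrix_qinv M (x + y) = matrix_qinv M x + matrix_qinv M y"
  by (cases x; cases y) (simp add: matrix_qinv_def qt_of_def qapp_def lessThan_4 algebra_simps)

lemma matrix_qinv_qscale: "matrix_qinv M (qscale c x) = qscale c (matrix_qinv M x)"
  by (cases x) (simp add: matrix_qinv_def qt_of_def qapp_def lessThan_4 algebra_simps)

lemma matrix_qinv_mult: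
  assumes "q_involution a b M"
  shows "matrix_qinv M (qmult a b p q) = qmult a b (matrix_qinv M q) (matrix_qinv M p)"
proof -
  have "matrix_qinv M (qmult a b p q) = qt_of (qapp M (qmul a b (coeffs p) (coeffs q)))"
    by (metis matrix_qinv_qt_of qt_of_coeffs qt_of_qmul)
  also have "\<dots> = qt_of (qmul a b (qapp M (coeffs q)) (qapp M (coeffs p)))"
    using assms unfolding q_involution_def qt_of_eq_iff by blast
  finally show ?thesis by (simp add: qt_of_qmul matrix_qinv_def)
qed

lemma matrix_qinv_matrix_qinv:
  assumes "q_involution a b M"
  shows "matrix_qinv M (matrix_qinv M p) = p"
proof -
  have "matrix_qinv M (matrix_qinv M p) = qt_of (qapp M (qapp M (coeffs p)))"
    unfolding matrix_qinv_def by (rule qt_of_qapp_cong) simp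
  also have "\<dots> = qt_of (coeffs p)"
    using assms unfolding q_involution_def qt_of_eq_iff by blast
  finally show ?thesis by simp
qed

lemma matrix_qinv_alternating:
  fixes x :: "nat \<Rightarrow> 'a::field"
  assumes "(2::'a) = 0"
  shows "qt_of (\<lambda>m. x m - qapp M x m) = qt_of x + matrix_qinv M (qt_of x)"
proof -
  interpret char2_quat "0::'a" "0::'a" by unfold_locales (rule assms)
  show ?thesis by (simp only: qt_of_diff matrix_qinv_qt_of qt_diff_eq_add)
qed

lemma quat_orthogonal_involution_matrix:
  fixes a b :: "'a::field"
  assumes two: "(2::'a::field) = 0" and "b \<noteq> 0" and orth: "q_orthogonal a b M"
  shows "quat_orthogonal_involution a b (matrix_qinv M)"
proof -
  have inv: "q_involution a b M" using orth unfolding q_orthogonal_def by blast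
  have "z + matrix_qinv M z \<noteq> qscalar 1" for z :: "'a qt"
  proof
    assume "z + matrix_qinv M z = qscalar 1"
    hence "qt_of qone = qt_of (\<lambda>m. coeffs z m - qapp M (coeffs z) m)"
      by (simp only: matrix_qinv_alternating[OF two] qt_of_coeffs qt_of_qone)
    hence "q_alt M qone" unfolding q_alt_def qt_of_eq_iff by blast
    thus False using orth unfolding q_orthogonal_def by blast
  qed
  thus ?thesis using assms
    by unfold_locales (simp_all add: matrix_qinv_add matrix_qinv_qscale
        matrix_qinv_mult[OF inv] matrix_qinv_matrix_qinv[OF inv])
qed

lemma quat_orthogonal_involution_disc_matrix:
  fixes a b :: "'a::field"
  assumes two: "(2::'a::field) = 0" and "b \<noteq> 0" and "q_orthogonal a b M"
    and disc: "q_disc_rep a b M \<alpha>"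
  shows "\<exists>z0. quat_orthogonal_involution_disc a b (matrix_qinv M) z0 \<alpha>"
proof -
  interpret quat_orthogonal_involution a b "matrix_qinv M"
    using quat_orthogonal_involution_matrix assms by blast
  obtain y x where "\<alpha> \<noteq> 0" and y: "\<forall>m<4. y m = x m - qapp M x m" and "qnrd a b y = \<alpha>"
    using disc unfolding q_disc_rep_def q_alt_def by blast
  moreover have "qt_of y = qt_of x + matrix_qinv M (qt_of x)"
  proof -
    have "qt_of y = qt_of (\<lambda>m. x m - qapp M x m)" unfolding qt_of_eq_iff using y by blast
    thus ?thesis by (simp only: matrix_qinv_alternating[OF two])
  qed
  moreover have "qnrd a b y = qnorm a b (qt_of y)"
    by (simp add: qnrd_def qt_of_def)
  ultimately show ?thesis
    by (metis quat_orthogonal_involution_disc.intro quat_orthogonal_involution_axioms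
        quat_orthogonal_involution_disc_axioms.intro)
qed

lemma qtrace_mult_qt_of: "qtrace (qmult a b h (qt_of z)) = (\<Sum>m<4. z m * qtrace (qmult a b h (qbasis m)))"
  by (cases h) (simp add: qt_of_def qbasis_def lessThan_4 algebra_simps)

lemma sum_lessThan_4_delta:
  assumes "(l::nat) < 4"
  shows "(\<Sum>j<4. of_bool (j = l) * (g j::'a::field)) = g l"
proof -
  have "(\<Sum>j<4. of_bool (j = l) * g j) = (\<Sum>j<4. if l = j then g j else 0)"
    by (rule sum.cong) auto
  thus ?thesis using assms by simp
qed

lemma qinv_form_trace_functional:
  assumes "k < 4" "l < 4"
  shows "qinv_form a b M (\<lambda>m. qtrace (qmult a b h (qbasis m))) k l
       = qtrace (qmult a b h (qmult a b (qbasis k) (matrix_qinv M (qbasis l))))"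
proof -
  define g where "g m = qtrace (qmult a b h (qbasis m))" for m
  have "matrix_qinv M (qbasis l) = qt_of (\<lambda>t. M l t)"
    unfolding qbasis_def matrix_qinv_qt_of qt_of_eq_iff qapp_def
    using assms by (simp add: sum_lessThan_4_delta)
  hence "qmult a b (qbasis k) (matrix_qinv M (qbasis l))
       = qt_of (qmul a b (\<lambda>j. of_bool (j = k)) (\<lambda>t. M l t))"
    by (simp add: qt_of_qmul qbasis_def)
  hence "qtrace (qmult a b h (qmult a b (qbasis k) (matrix_qinv M (qbasis l))))
      = (\<Sum>m<4. qmul a b (\<lambda>j. of_bool (j = k)) (\<lambda>t. M l t) m * g m)"
    unfolding g_def by (simp only: qtrace_mult_qt_of)
  also have "\<dots> = (\<Sum>m<4. (\<Sum>t<4. M l t * qconst a b k t m) * g m)"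
  proof (rule sum.cong[OF refl])
    fix m
    have "qmul a b (\<lambda>j. of_bool (j = k)) (\<lambda>t. M l t) m
        = (\<Sum>k'<4. of_bool (k' = k) * (\<Sum>t<4. M l t * qconst a b k' t m))"
      unfolding qmul_def by (simp only: sum_distrib_left mult.assoc)
    also have "\<dots> = (\<Sum>t<4. M l t * qconst a b k t m)"
      using assms(1) by (rule sum_lessThan_4_delta)
    finally show "qmul a b (\<lambda>j. of_bool (j = k)) (\<lambda>t. M l t) m * g m
        = (\<Sum>t<4. M l t * qconst a b k t m) * g m" by (simp only:)
  qed
  also have "\<dots> = (\<Sum>m<4. \<Sum>t<4. M l t * (qconst a b k t m * g m))"
    by (simp only: sum_distrib_right mult.assoc)
  also have "\<dots> = (\<Sum>t<4. \<Sum>m<4. M l t * (qconst a b k t m * g m))"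
    by (rule sum.swap)
  also have "\<dots> = qinv_form a b M g k l"
    unfolding qinv_form_def by (simp only: sum_distrib_left)
  finally show ?thesis unfolding g_def ..
qed

definition adapted_functional :: "'a::field \<Rightarrow> 'a \<Rightarrow> (nat \<Rightarrow> nat \<Rightarrow> 'a) \<Rightarrow> 'a \<Rightarrow> (nat \<Rightarrow> 'a) \<Rightarrow> bool" where
  "adapted_functional a b M \<alpha> f \<longleftrightarrow> f 0 = 1 \<and>
     (\<forall>k<4. \<forall>l<4. qinv_form a b M f k l = qinv_form a b M f l k) \<and>
     (\<forall>k<4. \<exists>p q. qinv_form a b M f k k = p^2 + q^2 * \<alpha>)"

lemma exists_adapted_functional:
  fixes a b \<alpha> :: "'a::field"
  assumes "(2::'a) = 0" "b \<noteq> 0" "q_orthogonal a b M" "q_disc_rep a b M \<alpha>"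
  shows "\<exists>f. adapted_functional a b M \<alpha> f"
proof -
  obtain z0 where "quat_orthogonal_involution_disc a b (matrix_qinv M) z0 \<alpha>"
    using quat_orthogonal_involution_disc_matrix assms by blast
  then interpret quat_orthogonal_involution_disc a b "matrix_qinv M" z0 \<alpha> .
  obtain h where h1: "qtrace h = 1"
    and sym: "\<forall>x z. qtrace (h \<cdot> (x \<cdot> matrix_qinv M z)) = qtrace (h \<cdot> (z \<cdot> matrix_qinv M x))"
    and diag: "\<forall>x. \<exists>p q. qtrace (h \<cdot> (x \<cdot> matrix_qinv M x)) = p^2 + q^2 * \<alpha>"
    using exists_symmetric_trace_functional by blast
  define f where "f m = qtrace (h \<cdot> qbasis m)" for m
  have "f 0 = 1" using h1 by (cases h) (simp add: f_def qbasis_def qt_of_def)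
  moreover have "qinv_form a b M f k l = qinv_form a b M f l k" if "k < 4" "l < 4" for k l
    unfolding f_def qinv_form_trace_functional[OF that]
      qinv_form_trace_functional[OF that(2,1)] using sym by blast
  moreover have "\<exists>p q. qinv_form a b M f k k = p^2 + q^2 * \<alpha>" if "k < 4" for k
    unfolding f_def qinv_form_trace_functional[OF that that] using diag by blast
  ultimately show ?thesis unfolding adapted_functional_def by blast
qed
section \<open>Tensor products and Pfister forms\<close>

lemma power2_sum_char2:
  fixes g :: "'b \<Rightarrow> 'a::field"
  assumes two: "(2::'a) = 0" and "finite A"
  shows "(\<Sum>s\<in>A. g s)^2 = (\<Sum>s\<in>A. g s ^ 2)"
  using \<open>finite A\<close>
proof (induction A rule: finite_induct)
  case (insert s A)
  have "(g s + (\<Sum>t\<in>A. g t))^2 = g s ^ 2 + (\<Sum>t\<in>A. g t)^2 + 2 * (g s * (\<Sum>t\<in>A. g t))"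
    by (simp add: power2_eq_square algebra_simps)
  thus ?case using insert two by simp
qed simp

lemma quadratic_sum_symmetric_char2:
  fixes K :: "'b \<Rightarrow> 'b \<Rightarrow> 'a::field"
  assumes two: "(2::'a) = 0" and "finite A"
    and "\<And>s t. s \<in> A \<Longrightarrow> t \<in> A \<Longrightarrow> K s t = K t s"
  shows "(\<Sum>s\<in>A. \<Sum>t\<in>A. g s * g t * K s t) = (\<Sum>s\<in>A. g s ^ 2 * K s s)"
  using assms(2,3)
proof (induction A rule: finite_induct)
  case (insert s A)
  have cross: "(\<Sum>t\<in>A. g s * g t * K s t) = (\<Sum>t\<in>A. g t * g s * K t s)"
    using insert.prems by (intro sum.cong) (auto simp: mult_ac)
  have "(\<Sum>t\<in>A. g s * g t * K s t) + (\<Sum>t\<in>A. g t * g s * K t s) = 0"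
    unfolding cross using two by (metis mult_2 mult_zero_left)
  hence "(\<Sum>s'\<in>insert s A. \<Sum>t\<in>insert s A. g s' * g t * K s' t)
      = g s * g s * K s s + (\<Sum>s'\<in>A. \<Sum>t\<in>A. g s' * g t * K s' t)"
    using insert.hyps by (simp add: sum.distrib algebra_simps)
  thus ?case using insert by (simp add: power2_eq_square)
qed simp

lemma finite_tidx: "finite (tidx n)"
  unfolding tidx_def by (rule finite_PiE) auto

lemma tidx_less_4: "r \<in> tidx n \<Longrightarrow> i < n \<Longrightarrow> r i < 4"
  unfolding tidx_def by (auto simp: PiE_def Pi_def)

lemma sum_tidx_prod: "(\<Sum>r\<in>tidx n. \<Prod>i<n. g i (r i)) = (\<Prod>i<n. \<Sum>m<4. (g i m :: 'a::field))"
  unfolding tidx_def by (rule prod_sum_PiE[symmetric]) auto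

definition tensor_functional :: "nat \<Rightarrow> (nat \<Rightarrow> nat \<Rightarrow> 'a::field) \<Rightarrow> ((nat \<Rightarrow> nat) \<Rightarrow> 'a) \<Rightarrow> 'a" where
  "tensor_functional n F z = (\<Sum>r\<in>tidx n. z r * (\<Prod>i<n. F i (r i)))"

lemma tensor_functional_tscal:
  assumes "\<forall>i<n. F i 0 = 1"
  shows "tensor_functional n F (tscal n c) = c"
proof -
  define r0 where "r0 = restrict (\<lambda>_. 0::nat) {..<n}"
  have r0: "r0 \<in> tidx n" by (auto simp: r0_def tidx_def)
  have "tensor_functional n F (tscal n c) = (\<Sum>r\<in>tidx n. if r = r0 then c * (\<Prod>i<n. F i (r i)) else 0)"
    unfolding tensor_functional_def tscal_def r0_def by (rule sum.cong) auto
  also have "\<dots> = c * (\<Prod>i<n. F i (r0 i))" using finite_tidx r0 by simp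
  also have "(\<Prod>i<n. F i (r0 i)) = 1" using assms by (intro prod.neutral) (auto simp: r0_def)
  finally show ?thesis by simp
qed

lemma tensor_functional_tmul:
  "tensor_functional n F (tmul n a b y z) = (\<Sum>s\<in>tidx n. \<Sum>t\<in>tidx n. y s * z t *
     (\<Prod>i<n. \<Sum>m<4. qconst (a i) (b i) (s i) (t i) m * F i m))"
proof -
  let ?T = "tidx n" and ?q = "\<lambda>s t r. \<Prod>i<n. qconst (a i) (b i) (s i) (t i) (r i) * F i (r i)"
  have "tensor_functional n F (tmul n a b y z)
      = (\<Sum>r\<in>?T. (\<Sum>s\<in>?T. \<Sum>t\<in>?T. y s * z t *
          (\<Prod>i<n. qconst (a i) (b i) (s i) (t i) (r i))) * (\<Prod>i<n. F i (r i)))"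
    unfolding tensor_functional_def tmul_def by (rule sum.cong) auto
  also have "\<dots> = (\<Sum>r\<in>?T. \<Sum>s\<in>?T. \<Sum>t\<in>?T. y s * z t * ?q s t r)"
    by (simp add: sum_distrib_right prod.distrib mult.assoc)
  also have "\<dots> = (\<Sum>s\<in>?T. \<Sum>t\<in>?T. \<Sum>r\<in>?T. y s * z t * ?q s t r)"
    by (subst sum.swap) (rule sum.cong[OF refl], rule sum.swap)
  also have "\<dots> = (\<Sum>s\<in>?T. \<Sum>t\<in>?T. y s * z t * (\<Sum>r\<in>?T. ?q s t r))"
    by (simp add: sum_distrib_left)
  also have "(\<lambda>s t. \<Sum>r\<in>?T. ?q s t r) = (\<lambda>s t. \<Prod>i<n. \<Sum>m<4. qconst (a i) (b i) (s i) (t i) m * F i m)"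
    by (intro ext sum_tidx_prod)
  finally show ?thesis .
qed

lemma tensor_functional_tmul_tinv:
  "tensor_functional n F (tmul n a b y (tinv n M z)) = (\<Sum>s\<in>tidx n. \<Sum>s'\<in>tidx n. y s * z s' *
     (\<Prod>i<n. qinv_form (a i) (b i) (M i) (F i) (s i) (s' i)))"
proof -
  let ?T = "tidx n"
  define P where "P i k t = (\<Sum>m<4. qconst (a i) (b i) k t m * F i m)" for i k t
  have "tensor_functional n F (tmul n a b y (tinv n M z))
      = (\<Sum>s\<in>?T. \<Sum>t\<in>?T. y s * (\<Sum>s'\<in>?T. z s' * (\<Prod>i<n. M i (s' i) (t i))) * (\<Prod>i<n. P i (s i) (t i)))"
    unfolding tensor_functional_tmul P_def
    by (intro sum.cong refl) (simp add: tinv_def)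
  also have "\<dots> = (\<Sum>s\<in>?T. \<Sum>t\<in>?T. \<Sum>s'\<in>?T. y s * z s' * (\<Prod>i<n. M i (s' i) (t i) * P i (s i) (t i)))"
    by (intro sum.cong refl) (simp add: sum_distrib_left sum_distrib_right prod.distrib mult_ac)
  also have "\<dots> = (\<Sum>s\<in>?T. \<Sum>s'\<in>?T. \<Sum>t\<in>?T. y s * z s' * (\<Prod>i<n. M i (s' i) (t i) * P i (s i) (t i)))"
    by (intro sum.cong refl sum.swap)
  also have "\<dots> = (\<Sum>s\<in>?T. \<Sum>s'\<in>?T. y s * z s' * (\<Prod>i<n. qinv_form (a i) (b i) (M i) (F i) (s i) (s' i)))"
  proof -
    have "(\<Sum>t\<in>?T. \<Prod>i<n. M i (s' i) (t i) * P i (s i) (t i))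
        = (\<Prod>i<n. qinv_form (a i) (b i) (M i) (F i) (s i) (s' i))" for s s'
      using sum_tidx_prod[where g="\<lambda>i t. M i (s' i) t * P i (s i) t"]
      by (simp only: qinv_form_def P_def)
    thus ?thesis by (simp only: sum_distrib_left[symmetric])
  qed
  finally show ?thesis .
qed

lemma prod_binary_forms_pfister:
  assumes "\<forall>i<n. \<exists>p q. d i = p^2 + q^2 * \<alpha> i"
  shows "\<exists>w. (\<Prod>i<n. d i) = pfister_form n \<alpha> w w"
proof -
  obtain p q where pq: "\<forall>i<n. d i = p i ^ 2 + q i ^ 2 * \<alpha> i"
    using assms by metis
  define w where "w S = (\<Prod>i\<in>S. q i) * (\<Prod>i\<in>{..<n} - S. p i)" for S
  have "(\<Prod>i<n. d i) = (\<Prod>i<n. q i ^ 2 * \<alpha> i + p i ^ 2)"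
    using pq by (intro prod.cong) (auto simp: add.commute)
  also have "\<dots> = (\<Sum>S\<in>Pow {..<n}. (\<Prod>i\<in>S. q i ^ 2 * \<alpha> i) * (\<Prod>i\<in>{..<n} - S. p i ^ 2))"
    by (rule prod_add) simp
  also have "\<dots> = pfister_form n \<alpha> w w"
    unfolding pfister_form_def w_def
    by (simp add: prod.distrib power_mult_distrib prod_power_distrib power2_eq_square mult_ac)
  finally show ?thesis by blast
qed

lemma pfister_form_sum_squares_char2:
  fixes g :: "'b \<Rightarrow> 'a::field"
  assumes two: "(2::'a) = 0" and "finite T"
  shows "(\<Sum>s\<in>T. g s ^ 2 * pfister_form n \<alpha> (w s) (w s))
       = pfister_form n \<alpha> (\<lambda>S. \<Sum>s\<in>T. g s * w s S) (\<lambda>S. \<Sum>s\<in>T. g s * w s S)"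
proof -
  have "(\<Sum>s\<in>T. g s ^ 2 * pfister_form n \<alpha> (w s) (w s))
      = (\<Sum>S\<in>Pow {..<n}. (\<Prod>i\<in>S. \<alpha> i) * (\<Sum>s\<in>T. (g s * w s S) ^ 2))"
    unfolding pfister_form_def
    by (simp add: sum_distrib_left power2_eq_square mult_ac sum.swap[of _ T])
  also have "\<dots> = pfister_form n \<alpha> (\<lambda>S. \<Sum>s\<in>T. g s * w s S) (\<lambda>S. \<Sum>s\<in>T. g s * w s S)"
    unfolding pfister_form_def power2_sum_char2[OF assms, symmetric]
    by (simp add: power2_eq_square mult.assoc)
  finally show ?thesis .
qed

lemma pfister_form_in_pfister_Q: "pfister_form n \<alpha> v v \<in> pfister_Q n \<alpha>"
proof (cases "\<exists>S\<in>Pow {..<n}. v S \<noteq> 0")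
  case False
  hence "pfister_form n \<alpha> v v = 0" by (simp add: pfister_form_def)
  thus ?thesis by (simp add: pfister_Q_def)
qed (auto simp: pfister_Q_def)

theorem corollary4p9:
  fixes n :: nat
    and a b :: "nat \<Rightarrow> 'a::field"
    and M :: "nat \<Rightarrow> nat \<Rightarrow> nat \<Rightarrow> 'a"
    and \<alpha> :: "nat \<Rightarrow> 'a"
    and x :: "(nat \<Rightarrow> nat) \<Rightarrow> 'a"
    and c :: 'a
  assumes char2: "CHAR('a) = 2"
    and quat: "\<forall>i<n. b i \<noteq> 0"
    and orth: "\<forall>i<n. q_orthogonal (a i) (b i) (M i)"
    and disc: "\<forall>i<n. q_disc_rep (a i) (b i) (M i) (\<alpha> i)"
    and sym: "x \<in> sym_plus n a b M"
    and sq: "tmul n a b x x = tscal n c"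
  shows "c \<in> pfister_Q n \<alpha>"
proof -
  have two: "(2::'a) = 0" using of_nat_CHAR[where 'a='a] char2 by simp
  have "\<forall>i. \<exists>f. i < n \<longrightarrow> adapted_functional (a i) (b i) (M i) (\<alpha> i) f"
    using exists_adapted_functional[OF two] quat orth disc by blast
  then obtain F where F: "\<And>i. i < n \<Longrightarrow> adapted_functional (a i) (b i) (M i) (\<alpha> i) (F i)"
    by (metis choice)
  let ?B = "\<lambda>i. qinv_form (a i) (b i) (M i) (F i)"
  have B_sym: "(\<Prod>i<n. ?B i (s i) (t i)) = (\<Prod>i<n. ?B i (t i) (s i))" if "s \<in> tidx n" "t \<in> tidx n" for s t
    using F that tidx_less_4 by (intro prod.cong) (auto simp: adapted_functional_def)
  have B_diag: "\<exists>w. (\<Prod>i<n. ?B i (s i) (s i)) = pfister_form n \<alpha> w w" if "s \<in> tidx n" for s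
    using F that tidx_less_4 by (intro prod_binary_forms_pfister) (auto simp: adapted_functional_def)
  then obtain w where w: "\<And>s. s \<in> tidx n \<Longrightarrow> (\<Prod>i<n. ?B i (s i) (s i)) = pfister_form n \<alpha> (w s) (w s)"
    by metis
  have "c = tensor_functional n F (tscal n c)"
    using F by (simp add: tensor_functional_tscal adapted_functional_def)
  also have "\<dots> = tensor_functional n F (tmul n a b x (tinv n M x))"
    using sq sym by (simp add: sym_plus_def)
  also have "\<dots> = (\<Sum>s\<in>tidx n. \<Sum>t\<in>tidx n. x s * x t * (\<Prod>i<n. ?B i (s i) (t i)))"
    by (rule tensor_functional_tmul_tinv)
  also have "\<dots> = (\<Sum>s\<in>tidx n. x s ^ 2 * (\<Prod>i<n. ?B i (s i) (s i)))"
    by (rule quadratic_sum_symmetric_char2[OF two finite_tidx B_sym])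
  also have "\<dots> = (\<Sum>s\<in>tidx n. x s ^ 2 * pfister_form n \<alpha> (w s) (w s))"
    by (intro sum.cong) (simp_all add: w)
  also have "\<dots> = pfister_form n \<alpha> (\<lambda>S. \<Sum>s\<in>tidx n. x s * w s S) (\<lambda>S. \<Sum>s\<in>tidx n. x s * w s S)"
    by (rule pfister_form_sum_squares_char2[OF two finite_tidx])
  finally show ?thesis using pfister_form_in_pfister_Q by simp
qed

end
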